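(* Let $C$ be a normalized symmetric conference matrix of order $n\ge 6$, and let \[a=-\frac{2}{n-2}\pm i\,\frac{\sqrt{n(n-4)}}{n-2}.\] Form $C+I_n$ and, in its lower right $(n-1)\times(n-1)$ block, replace every off-diagonal entry $1$ by $a$ and every entry $-1$ by $\overline a$. The resulting matrix is a complex Hadamard matrix of order $n$ whose entries lie in $\{1,a,\overline a\}$.
   Context: A conference matrix of order $n$ is an $n\times n$ matrix $C$ with zero diagonal, off-diagonal entries in $\{1,-1\}$, and $CC^T=(n-1)I_n$; it is normalized if all off-diagonal entries of its first row and first column equal $1$. A complex Hadamard matrix of order $n$ is an $n\times n$ complex matrix with all entries of modulus $1$ satisfying $HH^\ast=nI_n$. *)

theory Defs
  imports Complex_Main
begin

text \<open>Square matrices of order n are represented as functions nat => nat => 'a,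
  with indices 0..n-1 (index 0 = first row/column).\<close>

definition conference_matrix :: "nat \<Rightarrow> (nat \<Rightarrow> nat \<Rightarrow> real) \<Rightarrow> bool" where
  "conference_matrix n C \<longleftrightarrow>
     (\<forall>i<n. C i i = 0) \<and>
     (\<forall>i<n. \<forall>j<n. i \<noteq> j \<longrightarrow> C i j = 1 \<or> C i j = -1) \<and>
     (\<forall>i<n. \<forall>j<n. (\<Sum>k<n. C i k * C j k) = (if i = j then real n - 1 else 0))"

definition normalized_conf :: "nat \<Rightarrow> (nat \<Rightarrow> nat \<Rightarrow> real) \<Rightarrow> bool" where
  "normalized_conf n C \<longleftrightarrow> (\<forall>j. 1 \<le> j \<and> j < n \<longrightarrow> C 0 j = 1 \<and> C j 0 = 1)"

definition symmetric_mat :: "nat \<Rightarrow> (nat \<Rightarrow> nat \<Rightarrow> 'a) \<Rightarrow> bool" where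
  "symmetric_mat n C \<longleftrightarrow> (\<forall>i<n. \<forall>j<n. C i j = C j i)"

definition complex_hadamard :: "nat \<Rightarrow> (nat \<Rightarrow> nat \<Rightarrow> complex) \<Rightarrow> bool" where
  "complex_hadamard n H \<longleftrightarrow>
     (\<forall>i<n. \<forall>j<n. cmod (H i j) = 1) \<and>
     (\<forall>i<n. \<forall>j<n. (\<Sum>k<n. H i k * cnj (H j k)) = (if i = j then of_nat n else 0))"

definition conf_to_hadamard :: "(nat \<Rightarrow> nat \<Rightarrow> real) \<Rightarrow> complex \<Rightarrow> nat \<Rightarrow> nat \<Rightarrow> complex" where
  "conf_to_hadamard C a i j =
     (let e = C i j + (if i = j then 1 else 0) in
      if i = 0 \<or> j = 0 then complex_of_real e
      else if i \<noteq> j \<and> e = 1 then a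
      else if e = -1 then cnj a
      else complex_of_real e)"

end

theory Submission
  imports Defs
begin

(* Write a = r + i t.  For a normalized symmetric conference matrix C,
   the matrix H = conf_to_hadamard C a has first row and column and diagonal equal
   to 1, and H i k = r + i t C i k for the remaining entries (as C i k = 1 or -1).
   Orthogonality of the rows of C to the first row shows that every row of C
   other than the first has its entries outside columns 0 and i summing to 0.
   Hence a row i >= 1 of H sums to 2 + (n-2) r, and for distinct i, j >= 1 the
   inner product of rows i and j of H is 1 + 2r + (n-3) r^2 - t^2.  So H is a
   complex Hadamard matrix as soon as |a| = 1 and 2 + (n-2) r = 0, which is exactly
   what the given value of a satisfies. *)

lemma sum_of_real_parts:
  "(\<Sum>k\<in>R. complex_of_real (f k) + \<i> * complex_of_real (g k))
     = complex_of_real (sum f R) + \<i> * complex_of_real (sum g R)"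
  by (simp add: sum.distrib sum_distrib_left)

locale normalized_symmetric_conference =
  fixes n :: nat and C :: "nat \<Rightarrow> nat \<Rightarrow> real"
  assumes conference: "conference_matrix n C"
    and normalized: "normalized_conf n C"
    and symmetric: "symmetric_mat n C"
begin

lemma diag_zero: "i < n \<Longrightarrow> C i i = 0"
  using conference by (simp add: conference_matrix_def)

lemma off_diag_sign: "\<lbrakk>i < n; j < n; i \<noteq> j\<rbrakk> \<Longrightarrow> C i j = 1 \<or> C i j = -1"
  using conference by (simp add: conference_matrix_def)

lemma rows_orthogonal:
  "\<lbrakk>i < n; j < n\<rbrakk> \<Longrightarrow> (\<Sum>k<n. C i k * C j k) = (if i = j then real n - 1 else 0)"
  using conference by (simp add: conference_matrix_def)

lemma border_one: "\<lbrakk>1 \<le> j; j < n\<rbrakk> \<Longrightarrow> C 0 j = 1 \<and> C j 0 = 1"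
  using normalized by (simp add: normalized_conf_def)

lemma sym: "\<lbrakk>i < n; j < n\<rbrakk> \<Longrightarrow> C i j = C j i"
  using symmetric by (simp add: symmetric_mat_def)

(* Orthogonality to the all-ones first row: a row i >= 1 sums to 0 off the
   columns 0 and i. *)
lemma row_sum_off_border:
  assumes "1 \<le> i" "i < n"
  shows "(\<Sum>k\<in>{..<n} - {0, i}. C i k) = 0"
proof -
  have "0 = (\<Sum>k<n. C 0 k * C i k)"
    using rows_orthogonal[of 0 i] assms by simp
  also have "\<dots> = (\<Sum>k\<in>{..<n} - {0}. C i k)"
  proof -
    have "(\<Sum>k<n. C 0 k * C i k) = C 0 0 * C i 0 + (\<Sum>k\<in>{..<n} - {0}. C 0 k * C i k)"
      using assms by (subst sum.remove[of _ 0]) auto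
    also have "(\<Sum>k\<in>{..<n} - {0}. C 0 k * C i k) = (\<Sum>k\<in>{..<n} - {0}. C i k)"
      using border_one by (intro sum.cong) auto
    finally show ?thesis using assms diag_zero by simp
  qed
  also have "\<dots> = C i i + (\<Sum>k\<in>{..<n} - {0} - {i}. C i k)"
    using assms by (intro sum.remove) auto
  also have "{..<n} - {0} - {i} = {..<n} - {0, i}"
    by auto
  finally show ?thesis using diag_zero assms by simp
qed

lemma hadamard_entry:
  assumes "i < n" "k < n"
  shows "conf_to_hadamard C a i k =
    (if i = 0 \<or> k = 0 \<or> k = i then 1
     else of_real (Re a) + \<i> * of_real (Im a * C i k))"
proof (cases "i = 0 \<or> k = 0 \<or> k = i")
  case True
  then show ?thesis
    using assms diag_zero border_one by (auto simp: conf_to_hadamard_def Let_def)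
next
  case False
  then have "C i k = 1 \<or> C i k = -1" using off_diag_sign assms by auto
  then show ?thesis
    using False by (auto simp: conf_to_hadamard_def Let_def complex_eq_iff)
qed

lemma hadamard_entry_values:
  "\<lbrakk>i < n; k < n\<rbrakk> \<Longrightarrow> conf_to_hadamard C a i k \<in> {1, a, cnj a}"
  using hadamard_entry off_diag_sign[of i k] by (auto simp: complex_eq_iff)

lemma hadamard_entry_norm:
  assumes "cmod a = 1" "i < n" "k < n"
  shows "cmod (conf_to_hadamard C a i k) = 1"
  using hadamard_entry_values[OF assms(2,3), of a] assms(1) by auto

lemma hadamard_row_sum:
  assumes "1 \<le> i" "i < n"
  shows "(\<Sum>k<n. conf_to_hadamard C a i k) = of_real (2 + (real n - 2) * Re a)"
proof -
  let ?H = "conf_to_hadamard C a" and ?R = "{..<n} - {0, i}"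
  have "(\<Sum>k<n. ?H i k) = (\<Sum>k\<in>?R. ?H i k) + (\<Sum>k\<in>{0, i}. ?H i k)"
    by (rule sum.subset_diff) (use assms in auto)
  also have "(\<Sum>k\<in>{0, i}. ?H i k) = 2"
    using assms hadamard_entry[of i] by simp
  also have "(\<Sum>k\<in>?R. ?H i k) = (\<Sum>k\<in>?R. of_real (Re a) + \<i> * of_real (Im a * C i k))"
    using assms hadamard_entry[of i] by (intro sum.cong) auto
  also have "\<dots> = of_real (\<Sum>k\<in>?R. Re a) + \<i> * of_real (\<Sum>k\<in>?R. Im a * C i k)"
    by (rule sum_of_real_parts)
  also have "(\<Sum>k\<in>?R. Im a * C i k) = 0"
    using row_sum_off_border[OF assms] by (simp add: sum_distrib_left[symmetric])
  also have "(\<Sum>k\<in>?R. Re a) = (real n - 2) * Re a"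
    using assms by (simp add: card_Diff_subset)
  finally show ?thesis by simp
qed

lemma hadamard_inner_product:
  assumes "1 \<le> i" "i < n" "1 \<le> j" "j < n" "i \<noteq> j"
  shows "(\<Sum>k<n. conf_to_hadamard C a i k * cnj (conf_to_hadamard C a j k))
       = of_real (1 + 2 * Re a + (real n - 3) * (Re a)\<^sup>2 - (Im a)\<^sup>2)"
proof -
  let ?H = "conf_to_hadamard C a" and ?R = "{..<n} - {0, i, j}"
  define r t where "r = Re a" and "t = Im a"
  have sub: "{0, i, j} \<subseteq> {..<n}" using assms by auto
  have split: "(\<Sum>k<n. g k) = (\<Sum>k\<in>?R. g k) + g 0 + g i + g j" for g :: "nat \<Rightarrow> 'b::comm_monoid_add"
    using sum.subset_diff[OF sub, of g] assms by (simp add: add.assoc)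
  have Cij: "C j i = C i j" using sym assms by simp
  have sum_i: "(\<Sum>k\<in>?R. C i k) = - C i j"
  proof -
    have "?R = {..<n} - {0, i} - {j}" by auto
    then show ?thesis
      using row_sum_off_border[of i] sum.remove[of "{..<n} - {0, i}" j "C i"] assms by simp
  qed
  have sum_j: "(\<Sum>k\<in>?R. C j k) = - C i j"
  proof -
    have "?R = {..<n} - {0, j} - {i}" by auto
    then show ?thesis
      using row_sum_off_border[of j] sum.remove[of "{..<n} - {0, j}" i "C j"] Cij assms by simp
  qed
  have sum_ij: "(\<Sum>k\<in>?R. C i k * C j k) = -1"
    using split[of "\<lambda>k. C i k * C j k"] rows_orthogonal[of i j] assms diag_zero border_one by simp
  have "(\<Sum>k\<in>?R. ?H i k * cnj (?H j k))
      = (\<Sum>k\<in>?R. of_real (r\<^sup>2 + t\<^sup>2 * (C i k * C j k)) + \<i> * of_real (t * r * (C i k - C j k)))"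
    using assms hadamard_entry[of i] hadamard_entry[of j]
    by (intro sum.cong) (auto simp: r_def t_def complex_eq_iff power2_eq_square algebra_simps)
  also have "\<dots> = of_real (\<Sum>k\<in>?R. r\<^sup>2 + t\<^sup>2 * (C i k * C j k))
      + \<i> * of_real (\<Sum>k\<in>?R. t * r * (C i k - C j k))"
    by (rule sum_of_real_parts)
  also have "(\<Sum>k\<in>?R. t * r * (C i k - C j k)) = 0"
    using sum_i sum_j by (simp add: sum_distrib_left[symmetric] sum_subtractf)
  also have "(\<Sum>k\<in>?R. r\<^sup>2 + t\<^sup>2 * (C i k * C j k)) = (real n - 3) * r\<^sup>2 - t\<^sup>2"
    using sum_ij assms by (simp add: sum.distrib sum_distrib_left[symmetric] card_Diff_subset)
  finally have off: "(\<Sum>k\<in>?R. ?H i k * cnj (?H j k)) = of_real ((real n - 3) * r\<^sup>2 - t\<^sup>2)"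
    by simp
  have "?H i j * cnj (?H j j) + ?H i i * cnj (?H j i) = of_real (2 * r)"
    using assms Cij hadamard_entry[of i] hadamard_entry[of j] by (simp add: r_def complex_eq_iff)
  then show ?thesis
    using split[of "\<lambda>k. ?H i k * cnj (?H j k)"] off assms hadamard_entry[of i] hadamard_entry[of j]
    by (simp add: r_def t_def complex_eq_iff)
qed

theorem conf_to_hadamard_is_complex_hadamard:
  assumes unit: "cmod a = 1" and balance: "2 + (real n - 2) * Re a = 0"
  shows "complex_hadamard n (conf_to_hadamard C a)"
  unfolding complex_hadamard_def
proof (intro conjI allI impI)
  let ?H = "conf_to_hadamard C a"
  fix i j assume ij: "i < n" "j < n"
  show "cmod (?H i j) = 1" using hadamard_entry_norm[OF unit ij] .
  have row_zero: "(\<Sum>k<n. ?H i k) = 0" if "1 \<le> i" "i < n" for i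
    using hadamard_row_sum[OF that, of a] balance by (metis of_real_0)
  have unit_parts: "(Im a)\<^sup>2 = 1 - (Re a)\<^sup>2" using unit cmod_power2[of a] by simp
  show "(\<Sum>k<n. ?H i k * cnj (?H j k)) = (if i = j then of_nat n else 0)"
  proof (cases "i = j")
    case True
    have "?H i k * cnj (?H i k) = 1" if "k < n" for k
      using complex_norm_square[of "?H i k"] hadamard_entry_norm[OF unit ij(1) that] by simp
    then show ?thesis using True by simp
  next
    case False
    consider "i = 0" | "j = 0" | "1 \<le> i" "1 \<le> j" by linarith
    then show ?thesis
    proof cases
      case 1
      then have "(\<Sum>k<n. ?H i k * cnj (?H j k)) = cnj (\<Sum>k<n. ?H j k)"
        using hadamard_entry[of 0] by simp
      then show ?thesis using row_zero[of j] 1 False ij by simp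
    next
      case 2
      then have "(\<Sum>k<n. ?H i k * cnj (?H j k)) = (\<Sum>k<n. ?H i k)"
        using hadamard_entry[of 0] by simp
      then show ?thesis using row_zero[of i] 2 False ij by simp
    next
      case 3
      have "(\<Sum>k<n. ?H i k * cnj (?H j k))
          = of_real (1 + 2 * Re a + (real n - 3) * (Re a)\<^sup>2 - (Im a)\<^sup>2)"
        by (rule hadamard_inner_product[OF 3(1) ij(1) 3(2) ij(2) False])
      also have "1 + 2 * Re a + (real n - 3) * (Re a)\<^sup>2 - (Im a)\<^sup>2
          = Re a * (2 + (real n - 2) * Re a)"
        unfolding unit_parts by (simp add: power2_eq_square algebra_simps)
      finally show ?thesis using balance False by simp
    qed
  qed
qed

end

lemma parameter_conditions:
  fixes n :: nat and s :: real
  assumes "n \<ge> 4" "s = 1 \<or> s = -1"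
    and a: "a = Complex (- 2 / (real n - 2)) (s * sqrt (real n * (real n - 4)) / (real n - 2))"
  shows "cmod a = 1" and "2 + (real n - 2) * Re a = 0"
proof -
  have pos: "real n - 2 > 0" using assms(1) by simp
  have "(Re a)\<^sup>2 + (Im a)\<^sup>2 = (4 + s\<^sup>2 * (real n * (real n - 4))) / (real n - 2)\<^sup>2"
    using assms(1) by (simp add: a power_divide power_mult_distrib add_divide_distrib)
  also have "4 + s\<^sup>2 * (real n * (real n - 4)) = (real n - 2)\<^sup>2"
    using assms(2) by (auto simp: power2_eq_square algebra_simps)
  finally have "(cmod a)\<^sup>2 = 1" using pos by (simp add: cmod_power2)
  then show "cmod a = 1" using norm_ge_zero[of a] by (auto simp: power2_eq_1_iff)
  show "2 + (real n - 2) * Re a = 0" using pos by (simp add: a field_simps)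
qed

theorem proposition3:
  fixes n :: nat and C :: "nat \<Rightarrow> nat \<Rightarrow> real" and a :: complex and s :: real
  assumes "n \<ge> 6"
    and "conference_matrix n C" and "normalized_conf n C" and "symmetric_mat n C"
    and "s = 1 \<or> s = -1"
    and "a = Complex (- 2 / (real n - 2)) (s * sqrt (real n * (real n - 4)) / (real n - 2))"
  shows "complex_hadamard n (conf_to_hadamard C a)
         \<and> (\<forall>i<n. \<forall>j<n. conf_to_hadamard C a i j \<in> {1, a, cnj a})"
proof -
  interpret normalized_symmetric_conference n C
    using assms(2-4) by unfold_locales
  have "n \<ge> 4" using assms(1) by simp
  note conditions = parameter_conditions[OF this assms(5,6)]
  show ?thesis
    using conf_to_hadamard_is_complex_hadamard[OF conditions] hadamard_entry_values by blast
qed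

end
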